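(* Let $R$ be an associative unital division ring over a field of characteristic $0$, and let $\varphi_k\in R$ for $k\in\mathbb{Z}$. For $m\in\mathbb{Z}$ and $n\geq1$ put $$\Theta_{m,n}=\bigl(\varphi_{m+i+j-1}\bigr)_{1\leq i,j\leq n},\qquad \theta_{m,n}=|\Theta_{m,n}|_{nn},$$ with the convention $\theta_{m,0}^{-1}:=0$, and assume all quasideterminants involved are defined and all $\theta_{m,n}$ ($n\ge1$) invertible. Then for all $m\in\mathbb{Z}$, $n\geq1$, $$\theta_{m+2,n}=\theta_{m,n+1}+\theta_{m+1,n}\bigl(\theta_{m,n}^{-1}-\theta_{m+2,n-1}^{-1}\bigr)\theta_{m+1,n}.$$
   Context: For an $n\times n$ matrix $X$ over $R$, $|X|_{ij}=x_{ij}-r_i^j(X^{ij})^{-1}c_j^i$, where $X^{ij}$ is $X$ with row $i$ and column $j$ removed, $r_i^j$ is row $i$ without its $j$-th entry and $c_j^i$ is column $j$ without its $i$-th entry; for $n=1$, $|X|_{11}=x_{11}$. *)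

theory Defs
  imports Main
begin

text \<open>Square matrices of size n over a ring are represented as functions
  nat \<Rightarrow> nat \<Rightarrow> 'a, using only the entries with indices 0..n-1
  (0-based indexing: entry (i,j) here is entry (i+1,j+1) in the paper).\<close>

definition mat_mult :: "nat \<Rightarrow> (nat \<Rightarrow> nat \<Rightarrow> 'a::semiring_0) \<Rightarrow> (nat \<Rightarrow> nat \<Rightarrow> 'a) \<Rightarrow> nat \<Rightarrow> nat \<Rightarrow> 'a" where
  "mat_mult n A B = (\<lambda>i j. \<Sum>k<n. A i k * B k j)"

definition is_mat_inverse :: "nat \<Rightarrow> (nat \<Rightarrow> nat \<Rightarrow> 'a::semiring_1) \<Rightarrow> (nat \<Rightarrow> nat \<Rightarrow> 'a) \<Rightarrow> bool" where
  "is_mat_inverse n A B \<longleftrightarrow>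
     (\<forall>i<n. \<forall>j<n. mat_mult n A B i j = (if i = j then 1 else 0)) \<and>
     (\<forall>i<n. \<forall>j<n. mat_mult n B A i j = (if i = j then 1 else 0))"

definition mat_invertible :: "nat \<Rightarrow> (nat \<Rightarrow> nat \<Rightarrow> 'a::semiring_1) \<Rightarrow> bool" where
  "mat_invertible n A \<longleftrightarrow> (\<exists>B. is_mat_inverse n A B)"

text \<open>The (two-sided) inverse, normalised to be 0 outside the index range so it is unique.\<close>
definition mat_inv :: "nat \<Rightarrow> (nat \<Rightarrow> nat \<Rightarrow> 'a::semiring_1) \<Rightarrow> nat \<Rightarrow> nat \<Rightarrow> 'a" where
  "mat_inv n A = (THE B. is_mat_inverse n A B \<and> (\<forall>i j. (n \<le> i \<or> n \<le> j) \<longrightarrow> B i j = 0))"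

definition skip :: "nat \<Rightarrow> nat \<Rightarrow> nat" where
  "skip i a = (if a < i then a else Suc a)"

definition minor :: "(nat \<Rightarrow> nat \<Rightarrow> 'a) \<Rightarrow> nat \<Rightarrow> nat \<Rightarrow> nat \<Rightarrow> nat \<Rightarrow> 'a" where
  "minor X i j = (\<lambda>a b. X (skip i a) (skip j b))"

definition qdet :: "nat \<Rightarrow> (nat \<Rightarrow> nat \<Rightarrow> 'a::ring_1) \<Rightarrow> nat \<Rightarrow> nat \<Rightarrow> 'a" where
  "qdet n X i j =
     (if n = 1 then X i j
      else X i j - (\<Sum>a<n-1. \<Sum>b<n-1.
              X i (skip j a) * mat_inv (n-1) (minor X i j) a b * X (skip i b) j))"

definition qdet_defined :: "nat \<Rightarrow> (nat \<Rightarrow> nat \<Rightarrow> 'a::semiring_1) \<Rightarrow> nat \<Rightarrow> nat \<Rightarrow> bool" where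
  "qdet_defined n X i j \<longleftrightarrow> n = 1 \<or> mat_invertible (n-1) (minor X i j)"

definition Theta :: "(int \<Rightarrow> 'a) \<Rightarrow> int \<Rightarrow> nat \<Rightarrow> nat \<Rightarrow> nat \<Rightarrow> 'a" where
  "Theta \<phi> m n = (\<lambda>i j. \<phi> (m + int i + int j + 1))"

definition theta :: "(int \<Rightarrow> 'a::ring_1) \<Rightarrow> int \<Rightarrow> nat \<Rightarrow> 'a" where
  "theta \<phi> m n = qdet n (Theta \<phi> m n) (n-1) (n-1)"

definition theta_inv :: "(int \<Rightarrow> 'a::division_ring) \<Rightarrow> int \<Rightarrow> nat \<Rightarrow> 'a" where
  "theta_inv \<phi> m n = (if n = 0 then 0 else inverse (theta \<phi> m n))"

end

theory Submission
  imports Defs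
begin

(* Read \<phi> as the moment sequence of the functionals L_m(x^k) = \<phi>_(m+k+1) on polynomials
   with coefficients in R (acting on the left). The monic polynomial P_(m,d) of degree d that
   is L_m-orthogonal to 1, ..., x^(d-1) has lower coefficients
   -(\<phi>_(m+d+1), ..., \<phi>_(m+2d)) \<Theta>_(m,d)^(-1), and L_m(P_(m,d) x^d) = \<theta>_(m,d+1).
   A polynomial of degree at most d that is L_m-orthogonal to 1, ..., x^(d-1) is its
   coefficient of x^d times P_(m,d). Applying this to x P_(m+1,n-1) - P_(m,n) and to
   P_(m+1,n) - P_(m,n) expresses \<theta>_(m+1,n) and \<theta>_(m,n+1) through the coefficients
   q_(m,n) of x^(n-1) in P_(m,n); eliminating the q's gives the identity.
   Characteristic 0 is never used. *)

lemma sum_mult_delta: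
  "j < n \<Longrightarrow> (\<Sum>k<n. f k * (if k = j then 1 else 0)) = (f j :: 'a::semiring_1)"
  for n :: nat
  by (simp add: if_distrib cong: if_cong)

lemma sum_delta_mult:
  "i < n \<Longrightarrow> (\<Sum>k<n. (if i = k then 1 else 0) * f k) = (f i :: 'a::semiring_1)"
  for n :: nat
  by (simp add: if_distrib[of "\<lambda>x. x * f _"] cong: if_cong)

lemma sum_mat_mult_assoc:
  "(\<Sum>k<n. u k * mat_mult n A B k i) = (\<Sum>j<n. (\<Sum>k<n. u k * A k j) * B j i)"
  for u :: "nat \<Rightarrow> 'a::semiring_0"
proof -
  have "(\<Sum>k<n. u k * mat_mult n A B k i) = (\<Sum>k<n. \<Sum>j<n. u k * A k j * B j i)"
    by (simp add: mat_mult_def sum_distrib_left mult.assoc)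
  also have "\<dots> = (\<Sum>j<n. \<Sum>k<n. u k * A k j * B j i)"
    by (rule sum.swap)
  also have "\<dots> = (\<Sum>j<n. (\<Sum>k<n. u k * A k j) * B j i)"
    by (simp add: sum_distrib_right)
  finally show ?thesis .
qed

lemma is_mat_inverse_cong:
  assumes "\<And>i j. i < n \<Longrightarrow> j < n \<Longrightarrow> A i j = A' i j"
  shows "is_mat_inverse n A B \<longleftrightarrow> is_mat_inverse n A' B"
  using assms unfolding is_mat_inverse_def mat_mult_def by simp

lemma mat_inv_cong:
  assumes "\<And>i j. i < n \<Longrightarrow> j < n \<Longrightarrow> A i j = A' i j"
  shows "mat_inv n A = mat_inv n A'"
  unfolding mat_inv_def using is_mat_inverse_cong[OF assms] by simp

lemma is_mat_inverse_unique:
  fixes A B C :: "nat \<Rightarrow> nat \<Rightarrow> 'a::semiring_1"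
  assumes B: "is_mat_inverse n A B" and C: "is_mat_inverse n A C" and "i < n" "j < n"
  shows "B i j = C i j"
proof -
  have "B i j = (\<Sum>k<n. B i k * mat_mult n A C k j)"
    using C \<open>j < n\<close> by (simp add: is_mat_inverse_def sum_mult_delta)
  also have "\<dots> = (\<Sum>l<n. mat_mult n B A i l * C l j)"
    by (subst sum_mat_mult_assoc) (simp add: mat_mult_def)
  also have "\<dots> = (\<Sum>l<n. (if i = l then 1 else 0) * C l j)"
    using B \<open>i < n\<close> by (auto simp: is_mat_inverse_def intro!: sum.cong)
  also have "\<dots> = C i j"
    using \<open>i < n\<close> by (rule sum_delta_mult)
  finally show ?thesis .
qed

lemma is_mat_inverse_mat_inv:
  fixes A :: "nat \<Rightarrow> nat \<Rightarrow> 'a::semiring_1"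
  assumes "mat_invertible n A"
  shows "is_mat_inverse n A (mat_inv n A)"
proof -
  obtain B where B: "is_mat_inverse n A B"
    using assms mat_invertible_def by blast
  define B' where "B' = (\<lambda>i j. if i < n \<and> j < n then B i j else 0)"
  have B': "is_mat_inverse n A B'"
    using B unfolding is_mat_inverse_def mat_mult_def B'_def by simp
  have "mat_inv n A = B'"
    unfolding mat_inv_def
  proof (rule the_equality)
    show "is_mat_inverse n A B' \<and> (\<forall>i j. n \<le> i \<or> n \<le> j \<longrightarrow> B' i j = 0)"
      using B' by (auto simp: B'_def)
    fix C assume C: "is_mat_inverse n A C \<and> (\<forall>i j. n \<le> i \<or> n \<le> j \<longrightarrow> C i j = 0)"
    show "C = B'"
    proof (intro ext)
      fix i j
      show "C i j = B' i j"
        using C is_mat_inverse_unique[OF _ B', of C i j] by (cases "i < n \<and> j < n") (auto simp: B'_def)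
    qed
  qed
  with B' show ?thesis by simp
qed

lemma is_mat_inverse_left_kernel:
  fixes A B :: "nat \<Rightarrow> nat \<Rightarrow> 'a::semiring_1"
  assumes B: "is_mat_inverse n A B" and uA: "\<And>j. j < n \<Longrightarrow> (\<Sum>k<n. u k * A k j) = 0"
    and "i < n"
  shows "u i = 0"
proof -
  have "u i = (\<Sum>k<n. u k * mat_mult n A B k i)"
    using B \<open>i < n\<close> by (simp add: is_mat_inverse_def sum_mult_delta)
  also have "\<dots> = 0"
    unfolding sum_mat_mult_assoc by (simp add: uA)
  finally show ?thesis .
qed

lemma minor_Theta_Suc:
  "i < d \<Longrightarrow> j < d \<Longrightarrow> minor (Theta \<phi> m (Suc d)) d d i j = Theta \<phi> m d i j"
  by (simp add: minor_def skip_def Theta_def)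

lemma is_mat_inverse_Theta:
  fixes \<phi> :: "int \<Rightarrow> 'a::ring_1"
  assumes "\<And>m' k. 1 \<le> k \<Longrightarrow> qdet_defined k (Theta \<phi> m' k) (k-1) (k-1)"
  shows "is_mat_inverse d (Theta \<phi> m d) (mat_inv d (Theta \<phi> m d))"
proof (cases "d = 0")
  case True
  then show ?thesis by (simp add: is_mat_inverse_def)
next
  case False
  then have "mat_invertible d (minor (Theta \<phi> m (Suc d)) d d)"
    using assms[of "Suc d" m] by (simp add: qdet_defined_def)
  moreover have "is_mat_inverse d (minor (Theta \<phi> m (Suc d)) d d) B
      \<longleftrightarrow> is_mat_inverse d (Theta \<phi> m d) B" for B
    by (rule is_mat_inverse_cong) (rule minor_Theta_Suc)
  ultimately have "mat_invertible d (Theta \<phi> m d)"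
    by (simp add: mat_invertible_def)
  then show ?thesis by (rule is_mat_inverse_mat_inv)
qed

lemma theta_Suc:
  "theta \<phi> m (Suc d) = \<phi> (m + int d + int d + 1)
     - (\<Sum>a<d. \<Sum>b<d. \<phi> (m + int d + int a + 1) * mat_inv d (Theta \<phi> m d) a b
                        * \<phi> (m + int b + int d + 1))"
proof (cases "d = 0")
  case True
  then show ?thesis by (simp add: theta_def qdet_def Theta_def)
next
  case False
  have "mat_inv d (minor (Theta \<phi> m (Suc d)) d d) = mat_inv d (Theta \<phi> m d)"
    by (rule mat_inv_cong) (rule minor_Theta_Suc)
  with False show ?thesis
    by (auto simp: theta_def qdet_def skip_def Theta_def intro!: sum.cong)
qed

text \<open>\<open>hankel_form \<phi> m N u j\<close> is L_m(u x^j) for the polynomial u with coefficient vector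
  supported in \<open>{..<N}\<close>.\<close>

definition hankel_form :: "(int \<Rightarrow> 'a::semiring_0) \<Rightarrow> int \<Rightarrow> nat \<Rightarrow> (nat \<Rightarrow> 'a) \<Rightarrow> nat \<Rightarrow> 'a" where
  "hankel_form \<phi> m N u j = (\<Sum>k<N. u k * \<phi> (m + int k + int j + 1))"

definition mult_x :: "(nat \<Rightarrow> 'a::zero) \<Rightarrow> nat \<Rightarrow> 'a" where
  "mult_x u k = (case k of 0 \<Rightarrow> 0 | Suc k' \<Rightarrow> u k')"

lemma hankel_form_eq_sum_lessThan:
  assumes "d \<le> N" and "\<And>k. d \<le> k \<Longrightarrow> u k = 0"
  shows "hankel_form \<phi> m N u j = (\<Sum>k<d. u k * \<phi> (m + int k + int j + 1))"
  unfolding hankel_form_def by (rule sum.mono_neutral_right) (use assms in auto)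

lemma hankel_form_diff:
  "hankel_form \<phi> m N (\<lambda>k. u k - v k) j = hankel_form \<phi> m N u j - hankel_form \<phi> m N v j"
  for u v :: "nat \<Rightarrow> 'a::ring"
  unfolding hankel_form_def by (simp add: left_diff_distrib sum_subtractf)

lemma hankel_form_scale:
  "hankel_form \<phi> m N (\<lambda>k. c * u k) j = c * hankel_form \<phi> m N u j"
  unfolding hankel_form_def by (simp add: sum_distrib_left mult.assoc)

lemma hankel_form_Suc_index:
  "hankel_form \<phi> (m + 1) N u j = hankel_form \<phi> m N u (Suc j)"
  unfolding hankel_form_def by (simp add: algebra_simps)

lemma hankel_form_mult_x:
  assumes "0 < N" and "u (N - 1) = 0"
  shows "hankel_form \<phi> m N (mult_x u) j = hankel_form \<phi> (m + 1) N u j"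
proof -
  obtain N' where N: "N = Suc N'"
    using \<open>0 < N\<close> by (cases N) auto
  have "hankel_form \<phi> m N (mult_x u) j = (\<Sum>k<N'. u k * \<phi> (m + int (Suc k) + int j + 1))"
    unfolding hankel_form_def N sum.lessThan_Suc_shift by (simp add: mult_x_def)
  also have "\<dots> = hankel_form \<phi> (m + 1) N u j"
    using assms(2) by (simp add: hankel_form_def N algebra_simps)
  finally show ?thesis .
qed

text \<open>Coefficient vector of P_(m,d).\<close>

definition orth_poly :: "(int \<Rightarrow> 'a::ring_1) \<Rightarrow> int \<Rightarrow> nat \<Rightarrow> nat \<Rightarrow> 'a" where
  "orth_poly \<phi> m d k =
     (if k < d then - (\<Sum>a<d. \<phi> (m + int d + int a + 1) * mat_inv d (Theta \<phi> m d) a k)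
      else if k = d then 1 else 0)"

definition subleading_coeff :: "(int \<Rightarrow> 'a::ring_1) \<Rightarrow> int \<Rightarrow> nat \<Rightarrow> 'a" where
  "subleading_coeff \<phi> m d = (if d = 0 then 0 else orth_poly \<phi> m d (d - 1))"

lemma orth_poly_self [simp]: "orth_poly \<phi> m d d = 1"
  and orth_poly_above [simp]: "d < k \<Longrightarrow> orth_poly \<phi> m d k = 0"
  unfolding orth_poly_def by auto

lemma hankel_form_orth_poly:
  assumes "d < N"
  shows "hankel_form \<phi> m N (orth_poly \<phi> m d) j = \<phi> (m + int d + int j + 1)
     - (\<Sum>a<d. \<Sum>k<d. \<phi> (m + int d + int a + 1) * mat_inv d (Theta \<phi> m d) a k
                        * \<phi> (m + int k + int j + 1))"
proof -
  have "hankel_form \<phi> m N (orth_poly \<phi> m d) j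
      = (\<Sum>k<Suc d. orth_poly \<phi> m d k * \<phi> (m + int k + int j + 1))"
    by (rule hankel_form_eq_sum_lessThan) (use assms in auto)
  also have "\<dots> = \<phi> (m + int d + int j + 1)
     - (\<Sum>k<d. \<Sum>a<d. \<phi> (m + int d + int a + 1) * mat_inv d (Theta \<phi> m d) a k
                        * \<phi> (m + int k + int j + 1))"
    by (simp add: orth_poly_def sum_distrib_right sum_negf)
  also have "(\<Sum>k<d. \<Sum>a<d. \<phi> (m + int d + int a + 1) * mat_inv d (Theta \<phi> m d) a k
                        * \<phi> (m + int k + int j + 1))
      = (\<Sum>a<d. \<Sum>k<d. \<phi> (m + int d + int a + 1) * mat_inv d (Theta \<phi> m d) a k
                        * \<phi> (m + int k + int j + 1))"
    by (rule sum.swap)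
  finally show ?thesis .
qed

lemma hankel_form_orth_poly_less:
  fixes \<phi> :: "int \<Rightarrow> 'a::ring_1"
  assumes inv: "is_mat_inverse d (Theta \<phi> m d) (mat_inv d (Theta \<phi> m d))"
    and "d < N" and "j < d"
  shows "hankel_form \<phi> m N (orth_poly \<phi> m d) j = 0"
proof -
  let ?f = "\<lambda>a. \<phi> (m + int d + int a + 1)" and ?I = "mat_inv d (Theta \<phi> m d)"
  have "(\<Sum>a<d. \<Sum>k<d. ?f a * ?I a k * \<phi> (m + int k + int j + 1))
      = (\<Sum>a<d. ?f a * mat_mult d ?I (Theta \<phi> m d) a j)"
    by (simp add: mat_mult_def Theta_def sum_distrib_left mult.assoc)
  also have "\<dots> = ?f j"
    using inv \<open>j < d\<close> by (simp add: is_mat_inverse_def sum_mult_delta)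
  finally show ?thesis
    using \<open>d < N\<close> by (simp add: hankel_form_orth_poly)
qed

lemma hankel_form_orth_poly_self:
  "d < N \<Longrightarrow> hankel_form \<phi> m N (orth_poly \<phi> m d) d = theta \<phi> m (Suc d)"
  by (simp add: hankel_form_orth_poly theta_Suc)

lemma hankel_form_eq_coeff_mult_theta:
  fixes \<phi> :: "int \<Rightarrow> 'a::ring_1"
  assumes inv: "is_mat_inverse d (Theta \<phi> m d) (mat_inv d (Theta \<phi> m d))" and "d < N"
    and deg: "\<And>k. d < k \<Longrightarrow> u k = 0"
    and orth: "\<And>j. j < d \<Longrightarrow> hankel_form \<phi> m N u j = 0"
  shows "hankel_form \<phi> m N u d = u d * theta \<phi> m (Suc d)"
proof -
  define v where "v = (\<lambda>k. u k - u d * orth_poly \<phi> m d k)"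
  have hankel_v: "hankel_form \<phi> m N v j
      = hankel_form \<phi> m N u j - u d * hankel_form \<phi> m N (orth_poly \<phi> m d) j" for j
    unfolding v_def hankel_form_diff hankel_form_scale ..
  have v_above: "v k = 0" if "d \<le> k" for k
    using that deg by (cases "k = d") (auto simp: v_def)
  have "v i = 0" if "i < d" for i
  proof (rule is_mat_inverse_left_kernel[OF inv _ that])
    fix j assume "j < d"
    have "(\<Sum>k<d. v k * Theta \<phi> m d k j) = hankel_form \<phi> m N v j"
      using hankel_form_eq_sum_lessThan[of d N v] \<open>d < N\<close> v_above by (simp add: Theta_def)
    also have "\<dots> = 0"
      using \<open>j < d\<close> \<open>d < N\<close> by (simp add: hankel_v orth hankel_form_orth_poly_less[OF inv])
    finally show "(\<Sum>k<d. v k * Theta \<phi> m d k j) = 0" .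
  qed
  with v_above have "v = (\<lambda>_. 0)"
    by (metis not_le)
  then have "hankel_form \<phi> m N v d = 0"
    by (simp add: hankel_form_def)
  with \<open>d < N\<close> show ?thesis
    by (simp add: hankel_v hankel_form_orth_poly_self)
qed

lemma subleading_coeff_mult_x_diff:
  fixes \<phi> :: "int \<Rightarrow> 'a::ring_1"
  assumes inv: "\<And>m d. is_mat_inverse d (Theta \<phi> m d) (mat_inv d (Theta \<phi> m d))"
    and "1 \<le> n"
  shows "(subleading_coeff \<phi> (m + 1) (n - 1) - subleading_coeff \<phi> m n) * theta \<phi> m n
           = theta \<phi> (m + 1) n"
proof -
  define u where "u = (\<lambda>k. mult_x (orth_poly \<phi> (m + 1) (n - 1)) k - orth_poly \<phi> m n k)"
  have hankel_u: "hankel_form \<phi> m (Suc n) u j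
      = hankel_form \<phi> (m + 1) (Suc n) (orth_poly \<phi> (m + 1) (n - 1)) j
        - hankel_form \<phi> m (Suc n) (orth_poly \<phi> m n) j" for j
    unfolding u_def hankel_form_diff using \<open>1 \<le> n\<close> by (simp add: hankel_form_mult_x)
  have "hankel_form \<phi> m (Suc n) u (n - 1) = u (n - 1) * theta \<phi> m (Suc (n - 1))"
  proof (rule hankel_form_eq_coeff_mult_theta[OF inv])
    show "u k = 0" if "n - 1 < k" for k
      using that \<open>1 \<le> n\<close> by (cases "k = n") (auto simp: u_def mult_x_def split: nat.split)
    show "\<And>j. j < n - 1 \<Longrightarrow> hankel_form \<phi> m (Suc n) u j = 0"
      by (simp add: hankel_u hankel_form_orth_poly_less[OF inv])
  qed simp
  moreover have "hankel_form \<phi> m (Suc n) u (n - 1) = theta \<phi> (m + 1) n"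
    using \<open>1 \<le> n\<close>
    by (simp add: hankel_u hankel_form_orth_poly_self hankel_form_orth_poly_less[OF inv])
  moreover have "u (n - 1) = subleading_coeff \<phi> (m + 1) (n - 1) - subleading_coeff \<phi> m n"
    using \<open>1 \<le> n\<close> by (cases n) (auto simp: u_def subleading_coeff_def mult_x_def split: nat.split)
  ultimately show ?thesis
    using \<open>1 \<le> n\<close> by simp
qed

lemma subleading_coeff_shift_diff:
  fixes \<phi> :: "int \<Rightarrow> 'a::ring_1"
  assumes inv: "\<And>m d. is_mat_inverse d (Theta \<phi> m d) (mat_inv d (Theta \<phi> m d))"
    and "1 \<le> n"
  shows "(subleading_coeff \<phi> (m + 1) n - subleading_coeff \<phi> m n) * theta \<phi> (m + 1) n
           = - theta \<phi> m (Suc n)"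
proof -
  define u where "u = (\<lambda>k. orth_poly \<phi> (m + 1) n k - orth_poly \<phi> m n k)"
  have hankel_u: "hankel_form \<phi> (m + 1) (Suc n) u j
      = hankel_form \<phi> (m + 1) (Suc n) (orth_poly \<phi> (m + 1) n) j
        - hankel_form \<phi> m (Suc n) (orth_poly \<phi> m n) (Suc j)" for j
    unfolding u_def hankel_form_diff hankel_form_Suc_index ..
  have "hankel_form \<phi> (m + 1) (Suc n) u (n - 1) = u (n - 1) * theta \<phi> (m + 1) (Suc (n - 1))"
  proof (rule hankel_form_eq_coeff_mult_theta[OF inv])
    show "u k = 0" if "n - 1 < k" for k
      using that \<open>1 \<le> n\<close> by (cases "k = n") (auto simp: u_def)
    show "\<And>j. j < n - 1 \<Longrightarrow> hankel_form \<phi> (m + 1) (Suc n) u j = 0"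
      by (simp add: hankel_u hankel_form_orth_poly_less[OF inv])
  qed simp
  moreover have "hankel_form \<phi> (m + 1) (Suc n) u (n - 1) = - theta \<phi> m (Suc n)"
    using \<open>1 \<le> n\<close>
    by (simp add: hankel_u hankel_form_orth_poly_self hankel_form_orth_poly_less[OF inv])
  moreover have "u (n - 1) = subleading_coeff \<phi> (m + 1) n - subleading_coeff \<phi> m n"
    using \<open>1 \<le> n\<close> by (simp add: u_def subleading_coeff_def)
  ultimately show ?thesis
    using \<open>1 \<le> n\<close> by simp
qed

lemma eq_mult_inverse_if_mult_eq:
  fixes x y z :: "'a::division_ring"
  assumes "x * y = z" and "y \<noteq> 0"
  shows "x = z * inverse y"
  using assms by (metis mult.assoc right_inverse mult_1_right)

lemma subleading_coeff_shift_diff_eq: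
  fixes \<phi> :: "int \<Rightarrow> 'a::division_ring"
  assumes inv: "\<And>m d. is_mat_inverse d (Theta \<phi> m d) (mat_inv d (Theta \<phi> m d))"
    and nonzero: "1 \<le> n \<Longrightarrow> theta \<phi> (m + 1) n \<noteq> 0"
  shows "subleading_coeff \<phi> (m + 1) n - subleading_coeff \<phi> m n
           = - theta \<phi> m (Suc n) * theta_inv \<phi> (m + 1) n"
proof (cases "n = 0")
  case True
  then show ?thesis by (simp add: subleading_coeff_def theta_inv_def)
next
  case False
  then have "(subleading_coeff \<phi> (m + 1) n - subleading_coeff \<phi> m n) * theta \<phi> (m + 1) n
               = - theta \<phi> m (Suc n)"
    by (simp add: subleading_coeff_shift_diff[OF inv])
  then have "subleading_coeff \<phi> (m + 1) n - subleading_coeff \<phi> m n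
               = - theta \<phi> m (Suc n) * inverse (theta \<phi> (m + 1) n)"
    by (rule eq_mult_inverse_if_mult_eq) (use False nonzero in simp)
  with False show ?thesis
    by (simp add: theta_inv_def)
qed

theorem proposition4p5:
  fixes \<phi> :: "int \<Rightarrow> 'a::{division_ring, ring_char_0}"
    and m :: int and n :: nat
  assumes defined: "\<And>m' k. 1 \<le> k \<Longrightarrow> qdet_defined k (Theta \<phi> m' k) (k-1) (k-1)"
    and invertible: "\<And>m' k. 1 \<le> k \<Longrightarrow> theta \<phi> m' k \<noteq> 0"
    and n: "1 \<le> n"
  shows "theta \<phi> (m+2) n =
           theta \<phi> m (n+1)
           + theta \<phi> (m+1) n * (theta_inv \<phi> m n - theta_inv \<phi> (m+2) (n-1)) * theta \<phi> (m+1) n"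
proof -
  note inv = is_mat_inverse_Theta[OF defined]
  let ?q = "subleading_coeff \<phi>" and ?t = "theta \<phi> (m + 1) n"
  have mult_x_m: "?q (m + 1) (n - 1) - ?q m n = ?t * theta_inv \<phi> m n"
  proof -
    have "?q (m + 1) (n - 1) - ?q m n = ?t * inverse (theta \<phi> m n)"
      using subleading_coeff_mult_x_diff[OF inv n] invertible[OF n]
      by (rule eq_mult_inverse_if_mult_eq)
    with n show ?thesis
      by (simp add: theta_inv_def)
  qed
  have shift_m1: "?q (m + 2) (n - 1) - ?q (m + 1) (n - 1) = - ?t * theta_inv \<phi> (m + 2) (n - 1)"
    using subleading_coeff_shift_diff_eq[OF inv invertible, of "n - 1" "m + 1"] n
    by (simp add: add.assoc)
  have mult_x_m1: "(?q (m + 2) (n - 1) - ?q (m + 1) n) * ?t = theta \<phi> (m + 2) n"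
    using subleading_coeff_mult_x_diff[OF inv n, of "m + 1"] by (simp add: add.assoc)
  have shift_m: "(?q (m + 1) n - ?q m n) * ?t = - theta \<phi> m (n + 1)"
    using subleading_coeff_shift_diff[OF inv n, of m] by simp
  have "theta \<phi> (m + 2) n
      = ((?q (m + 2) (n - 1) - ?q (m + 1) (n - 1)) + (?q (m + 1) (n - 1) - ?q m n)) * ?t
        - (?q (m + 1) n - ?q m n) * ?t"
    unfolding mult_x_m1[symmetric] by (simp add: algebra_simps)
  also have "\<dots> = theta \<phi> m (n + 1)
      + ?t * (theta_inv \<phi> m n - theta_inv \<phi> (m + 2) (n - 1)) * ?t"
    unfolding shift_m1 mult_x_m shift_m by (simp add: algebra_simps)
  finally show ?thesis .
qed

end
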